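(* Let $\mathcal{X}$ and $\mathcal{Y}$ be Banach spaces, let $\mathcal{G}, \widetilde{\mathcal{G}}_w \in C^1(\mathcal{X};\mathcal{Y})$, and let $F:\mathcal{Y}\times\mathcal{X}\to\mathbb{R}$ be continuously (Fréchet) differentiable with a Lipschitz continuous derivative. Define $f(a) := F(\mathcal{G}(a),a)$ and $\widetilde{f}_w(a) := F(\widetilde{\mathcal{G}}_w(a),a)$. Let $a^\dagger\in\mathcal{X}$ be a stationary point of $\widetilde{f}_w$, i.e. $D\widetilde{f}_w(a^\dagger)=0$. Then $$\|Df(a^\dagger)\|_{\mathcal{X}'} \le \mathscr{C}\left(\|\mathcal{G}(a^\dagger)\|_{\mathcal{Y}} + \|D\mathcal{G}(a^\dagger)\|_{\mathscr{L}(\mathcal{X},\mathcal{Y})} + \|a^\dagger\|_{\mathcal{X}} + 1\right)\left(\mathscr{E}_0(a^\dagger)+\mathscr{E}_1(a^\dagger)+\mathscr{E}_0(a^\dagger)\mathscr{E}_1(a^\dagger)\right),$$ where $\mathscr{C}>0$ is a constant depending only on $F$, $\mathscr{E}_0(a):=\|\mathcal{G}(a)-\widetilde{\mathcal{G}}_w(a)\|_{\mathcal{Y}}$ and $\mathscr{E}_1(a):=\|D\mathcal{G}(a)-D\widetilde{\mathcal{G}}_w(a)\|_{\mathscr{L}(\mathcal{X},\mathcal{Y})}$.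
   Context: $\mathcal{X}'$ denotes the topological dual of $\mathcal{X}$; $\mathscr{L}(\mathcal{X},\mathcal{Y})$ is the space of bounded linear operators with the operator norm; $D$ denotes the Fréchet derivative. *)

theory Defs
  imports "HOL-Analysis.Analysis"
begin

definition C1_with_deriv :: "('a::real_normed_vector \<Rightarrow> 'b::real_normed_vector) \<Rightarrow> ('a \<Rightarrow> ('a \<Rightarrow>\<^sub>L 'b)) \<Rightarrow> bool" where
  "C1_with_deriv f f' \<longleftrightarrow> (\<forall>x. (f has_derivative blinfun_apply (f' x)) (at x)) \<and> continuous_on UNIV f'"

end

theory Submission
  imports Defs
begin

text \<open>Write \<open>A = DF(G a, a)\<close> and \<open>B = DF(Gt a, a)\<close>. By the chain rule
  \<open>Df h = A (DG h, h)\<close>, while stationarity says \<open>B (DGt h, h) = 0\<close>; hence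
  \<open>Df h = (A - B) (DG h, h) + B ((DG - DGt) h, 0)\<close>. The Lipschitz bound on \<open>DF\<close>
  controls \<open>\<parallel>A - B\<parallel>\<close> by \<open>\<E>\<^sub>0\<close> and \<open>\<parallel>B\<parallel>\<close> by an affine function of
  \<open>\<parallel>G a\<parallel> + \<E>\<^sub>0 + \<parallel>a\<parallel>\<close>, and collecting terms gives the estimate with
  \<open>C = L + \<parallel>DF(0, 0)\<parallel> + 1\<close>.\<close>

lemma has_derivative_along_graph:
  assumes "(F has_derivative F') (at (G a, a))" and "(G has_derivative G') (at a)"
  shows "((\<lambda>b. F (G b, b)) has_derivative (\<lambda>h. F' (G' h, h))) (at a)"
proof -
  have "((\<lambda>b. (G b, b)) has_derivative (\<lambda>h. (G' h, h))) (at a)"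
    using has_derivative_Pair[OF assms(2) has_derivative_ident] .
  from has_derivative_compose[OF this assms(1)] show ?thesis
    by (simp add: o_def)
qed

lemma C1_with_deriv_along_graph:
  assumes "C1_with_deriv F F'" and "C1_with_deriv G G'"
  shows "((\<lambda>b. F (G b, b)) has_derivative (\<lambda>h. F' (G a, a) (G' a h, h))) (at a)"
  using assms unfolding C1_with_deriv_def by (blast intro: has_derivative_along_graph)

lemma lipschitz_on_norm_le:
  assumes "L-lipschitz_on UNIV f"
  shows "norm (f x) \<le> norm (f 0) + L * norm x"
proof -
  have "norm (f x - f 0) \<le> L * norm x"
    using lipschitz_on_normD[OF assms, of x 0] by simp
  then show ?thesis
    using norm_triangle_ineq2[of "f x" "f 0"] by linarith
qed

lemma lipschitz_on_norm_Pair_le: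
  fixes f :: "'y::real_normed_vector \<times> 'x::real_normed_vector \<Rightarrow> 'z::real_normed_vector"
  assumes "L-lipschitz_on UNIV f"
  shows "norm (f (y', x)) \<le> norm (f 0) + L * (norm y + norm (y - y') + norm x)"
proof -
  have "norm (y', x) \<le> norm y + norm (y - y') + norm x"
    using norm_Pair_le[of y' x] norm_triangle_ineq4[of y "y - y'"] by simp
  with lipschitz_on_norm_le[OF assms, of "(y', x)"] lipschitz_on_nonneg[OF assms] show ?thesis
    by (meson add_left_mono mult_left_mono order_trans)
qed

lemma norm_blinfun_graph_le_of_vanishing:
  fixes A B :: "('y::real_normed_vector \<times> 'x::real_normed_vector) \<Rightarrow>\<^sub>L 'z::real_normed_vector"
    and P Q :: "'x \<Rightarrow>\<^sub>L 'y" and Df :: "'x \<Rightarrow>\<^sub>L 'z"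
  assumes Df: "\<And>h. Df h = A (P h, h)" and B_Q: "\<And>h. B (Q h, h) = 0"
  shows "norm Df \<le> norm (A - B) * (norm P + 1) + norm B * norm (P - Q)"
proof (rule norm_blinfun_bound)
  show "0 \<le> norm (A - B) * (norm P + 1) + norm B * norm (P - Q)"
    by simp
  fix h
  have "Df h = (A - B) (P h, h) + B ((P - Q) h, 0)"
  proof -
    have "(P h, h) = (Q h, h) + ((P - Q) h, 0)"
      by (simp add: blinfun.diff_left)
    then have "B (P h, h) = B ((P - Q) h, 0)"
      by (metis B_Q add_0 blinfun.add_right)
    then show ?thesis
      by (simp add: Df blinfun.diff_left)
  qed
  also have "norm \<dots> \<le> norm (A - B) * norm (P h, h) + norm B * norm ((P - Q) h, 0::'x)"
    by (intro norm_triangle_le add_mono norm_blinfun)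
  also have "\<dots> \<le> norm (A - B) * ((norm P + 1) * norm h) + norm B * (norm (P - Q) * norm h)"
  proof (intro add_mono mult_left_mono)
    show "norm (P h, h) \<le> (norm P + 1) * norm h"
      using norm_Pair_le[of "P h" h] norm_blinfun[of P h] by (simp add: algebra_simps)
    show "norm ((P - Q) h, 0::'x) \<le> norm (P - Q) * norm h"
      by (simp add: norm_Pair norm_blinfun)
  qed simp_all
  finally show "norm (Df h) \<le> (norm (A - B) * (norm P + 1) + norm B * norm (P - Q)) * norm h"
    by (simp add: algebra_simps)
qed

lemma error_terms_le_product:
  fixes L n g g' x e0 e1 :: real
  assumes "0 \<le> L" "0 \<le> n" "0 \<le> g" "0 \<le> g'" "0 \<le> x" "0 \<le> e0" "0 \<le> e1"
  shows "L * e0 * (g' + 1) + (n + L * (g + e0 + x)) * e1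
    \<le> (L + n + 1) * (g + g' + x + 1) * (e0 + e1 + e0 * e1)"
  using assms by (simp add: algebra_simps add_increasing add_increasing2 mult_nonneg_nonneg)

theorem proposition1:
  fixes F :: "'y::banach \<times> 'x::banach \<Rightarrow> real"
    and F' :: "'y \<times> 'x \<Rightarrow> (('y \<times> 'x) \<Rightarrow>\<^sub>L real)"
  assumes F_C1: "C1_with_deriv F F'"
    and F'_lip: "\<exists>L. L-lipschitz_on UNIV F'"
  shows "\<exists>C>0. \<forall>(G :: 'x \<Rightarrow> 'y) G' Gt Gt' (a :: 'x) (Df :: 'x \<Rightarrow>\<^sub>L real).
     C1_with_deriv G G' \<longrightarrow> C1_with_deriv Gt Gt' \<longrightarrow>
     ((\<lambda>b. F (Gt b, b)) has_derivative (\<lambda>h. 0)) (at a) \<longrightarrow>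
     ((\<lambda>b. F (G b, b)) has_derivative blinfun_apply Df) (at a) \<longrightarrow>
     norm Df \<le> C * (norm (G a) + norm (G' a) + norm a + 1) *
        (norm (G a - Gt a) + norm (G' a - Gt' a) + norm (G a - Gt a) * norm (G' a - Gt' a))"
proof -
  obtain L where lip: "L-lipschitz_on UNIV F'"
    using F'_lip by blast
  have "0 \<le> L"
    using lipschitz_on_nonneg[OF lip] .
  show ?thesis
  proof (intro exI[of _ "L + norm (F' 0) + 1"] conjI allI impI)
    show "0 < L + norm (F' 0) + 1"
      using \<open>0 \<le> L\<close> norm_ge_zero[of "F' 0"] by linarith
    fix G :: "'x \<Rightarrow> 'y" and G' Gt Gt' a and Df :: "'x \<Rightarrow>\<^sub>L real"
    assume G_C1: "C1_with_deriv G G'" and Gt_C1: "C1_with_deriv Gt Gt'"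
      and stationary: "((\<lambda>b. F (Gt b, b)) has_derivative (\<lambda>h. 0)) (at a)"
      and Df: "((\<lambda>b. F (G b, b)) has_derivative blinfun_apply Df) (at a)"
    have "norm Df \<le> norm (F' (G a, a) - F' (Gt a, a)) * (norm (G' a) + 1)
        + norm (F' (Gt a, a)) * norm (G' a - Gt' a)"
    proof (rule norm_blinfun_graph_le_of_vanishing)
      show "Df h = F' (G a, a) (G' a h, h)" for h
        using has_derivative_unique[OF Df C1_with_deriv_along_graph[OF F_C1 G_C1]] by metis
      show "F' (Gt a, a) (Gt' a h, h) = 0" for h
        using has_derivative_unique[OF stationary C1_with_deriv_along_graph[OF F_C1 Gt_C1]] by metis
    qed
    also have "\<dots> \<le> L * norm (G a - Gt a) * (norm (G' a) + 1)
        + (norm (F' 0) + L * (norm (G a) + norm (G a - Gt a) + norm a)) * norm (G' a - Gt' a)"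
    proof (intro add_mono mult_right_mono)
      show "norm (F' (G a, a) - F' (Gt a, a)) \<le> L * norm (G a - Gt a)"
        using lipschitz_on_normD[OF lip, of "(G a, a)" "(Gt a, a)"] by (simp add: norm_Pair)
      show "norm (F' (Gt a, a)) \<le> norm (F' 0) + L * (norm (G a) + norm (G a - Gt a) + norm a)"
        using lipschitz_on_norm_Pair_le[OF lip] .
    qed simp_all
    also have "\<dots> \<le> (L + norm (F' 0) + 1) * (norm (G a) + norm (G' a) + norm a + 1) *
        (norm (G a - Gt a) + norm (G' a - Gt' a) + norm (G a - Gt a) * norm (G' a - Gt' a))"
      using \<open>0 \<le> L\<close> by (intro error_terms_le_product) simp_all
    finally show "norm Df \<le> (L + norm (F' 0) + 1) * (norm (G a) + norm (G' a) + norm a + 1) *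
        (norm (G a - Gt a) + norm (G' a - Gt' a) + norm (G a - Gt a) * norm (G' a - Gt' a))" .
  qed
qed

end
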